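(* For $n\ge 0$ let $s_n=\sum_{r=0}^{n} 1/r!$ and define the integer $A_n$ by $A_n/n! = s_n$, i.e. $A_n=\sum_{r=0}^n n!/r!$. Let $d_n=\gcd(A_n,n!)$. Then for every $n\ge 0$, $$d_n\, d_{n+1}\, d_{n+2} \le (n+3)!.$$ *)

theory Defs
  imports Main
begin

definition A_seq :: "nat \<Rightarrow> nat" where
  "A_seq n = (\<Sum>r = 0..n. fact n div fact r)"

definition d_seq :: "nat \<Rightarrow> nat" where
  "d_seq n = gcd (A_seq n) (fact n)"

end

theory Submission
  imports Defs
begin

text \<open>The recursion \<open>A\<^sub>n\<^sub>+\<^sub>1 = (n+1) A\<^sub>n + 1\<close> makes consecutive \<open>d\<^sub>n\<close> coprime and forces
  every common divisor of \<open>d\<^sub>n\<close> and \<open>d\<^sub>n\<^sub>+\<^sub>2\<close> to divide \<open>n + 3\<close>. All three \<open>d\<close>'s divide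
  \<open>(n+2)!\<close>, so \<open>d\<^sub>n\<^sub>+\<^sub>1 \<cdot> lcm d\<^sub>n d\<^sub>n\<^sub>+\<^sub>2\<close> divides \<open>(n+2)!\<close>, and the remaining factor
  \<open>gcd d\<^sub>n d\<^sub>n\<^sub>+\<^sub>2\<close> is at most \<open>n + 3\<close>.\<close>

lemma A_seq_Suc: "A_seq (Suc n) = Suc n * A_seq n + 1"
proof -
  have "(\<Sum>r = 0..n. fact (Suc n) div fact r) = (\<Sum>r = 0..n. Suc n * (fact n div (fact r :: nat)))"
  proof (rule sum.cong[OF refl])
    fix r assume "r \<in> {0..n}"
    then have "(fact r :: nat) dvd fact n" by (simp add: fact_dvd)
    then show "fact (Suc n) div fact r = Suc n * (fact n div (fact r :: nat))"
      by (simp add: div_mult_swap)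
  qed
  then show ?thesis unfolding A_seq_def by (simp add: sum_distrib_left)
qed

lemma A_seq_Suc_Suc: "A_seq (n + 2) = (n + 2) * (n + 1) * A_seq n + (n + 3)"
  using A_seq_Suc[of "Suc n"] A_seq_Suc[of n] by (simp add: algebra_simps)

lemma d_seq_dvd_A_seq: "d_seq n dvd A_seq n"
  unfolding d_seq_def by simp

lemma d_seq_dvd_fact:
  assumes "m \<le> n"
  shows "d_seq m dvd fact n"
  using dvd_trans[OF gcd_dvd2 fact_dvd[OF assms]] unfolding d_seq_def .

lemma coprime_d_seq_Suc: "coprime (d_seq n) (d_seq (Suc n))"
proof (rule coprimeI)
  fix c assume "c dvd d_seq n" "c dvd d_seq (Suc n)"
  then have "c dvd A_seq n" "c dvd A_seq (Suc n)"
    using d_seq_dvd_A_seq dvd_trans by blast+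
  then have "c dvd Suc n * A_seq n" "c dvd Suc n * A_seq n + 1"
    by (simp_all add: A_seq_Suc)
  then show "is_unit c"
    using dvd_add_right_iff by blast
qed

lemma gcd_d_seq_dvd: "gcd (d_seq n) (d_seq (n + 2)) dvd n + 3"
proof -
  let ?g = "gcd (d_seq n) (d_seq (n + 2))"
  have "?g dvd A_seq n" "?g dvd A_seq (n + 2)"
    using d_seq_dvd_A_seq by (meson dvd_trans gcd_dvd1 gcd_dvd2)+
  then have "?g dvd (n + 2) * (n + 1) * A_seq n" "?g dvd (n + 2) * (n + 1) * A_seq n + (n + 3)"
    by (simp, simp only: A_seq_Suc_Suc[symmetric])
  then show ?thesis
    using dvd_add_right_iff by blast
qed

lemma mult_le_gcd_mult_if_dvd_coprime:
  fixes a b c N :: nat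
  assumes "a dvd N" "b dvd N" "c dvd N" "coprime b a" "coprime b c" "N > 0"
  shows "a * b * c \<le> gcd a c * N"
proof -
  have "coprime b (a * c)"
    using assms(4,5) by simp
  then have "coprime b (lcm a c)"
    using coprime_divisors[of b b "lcm a c" "a * c"] by (simp add: lcm_least)
  then have "b * lcm a c dvd N"
    using assms(1-3) by (simp add: divides_mult)
  then have "b * lcm a c \<le> N"
    using assms(6) by (simp add: dvd_imp_le)
  have "a * b * c = gcd a c * (b * lcm a c)"
    using gcd_mult_lcm[of a c] by (simp add: ac_simps)
  also have "\<dots> \<le> gcd a c * N"
    using \<open>b * lcm a c \<le> N\<close> by (rule mult_le_mono2)
  finally show ?thesis .
qed

theorem lemma2p2:
  fixes n :: nat
  shows "d_seq n * d_seq (n + 1) * d_seq (n + 2) \<le> fact (n + 3)"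
proof -
  have "d_seq n * d_seq (n + 1) * d_seq (n + 2) \<le> gcd (d_seq n) (d_seq (n + 2)) * fact (n + 2)"
    using coprime_d_seq_Suc[of n, THEN coprime_commute[THEN iffD1]] coprime_d_seq_Suc[of "n + 1"]
    by (intro mult_le_gcd_mult_if_dvd_coprime d_seq_dvd_fact) simp_all
  also have "\<dots> \<le> (n + 3) * fact (n + 2)"
    using gcd_d_seq_dvd[of n] by (simp add: dvd_imp_le)
  also have "\<dots> = fact (n + 3)"
    by (simp add: fact_Suc eval_nat_numeral)
  finally show ?thesis .
qed

end
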